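(* Let $k$ be even, $d\ge1$, $\ell\ge1$, $n\ge1$, $p\in[0,1]$, and let $\Phi$ be a random $k$-XOR instance with probability $p$. Then $$\mathbb{E}\,\mathrm{tr}\big((R^{\Phi,d})^{2\ell}\big)\le\frac{1}{((kd/2)!)^{2\ell}}\sum_{\mathcal{Q}\text{ even}}\Big[\big(p\,(kd/2)^{k/2}\big)^{|\mathcal{Q}|}\sum_{\{I_j\}\ \mathcal{Q}\text{-valid}}\ \prod_{j=1}^{2\ell}\mathrm{hist}(I_j)!\Big],$$ where the outer sum is over all even partitions $\mathcal{Q}$ of $\mathcal{I}=\{(j,s):j\in[2\ell],s\in[d]\}$ and the inner sum over all $\mathcal{Q}$-valid collections $\{I_j\}_{j=1}^{2\ell}$ of tuples in $[n]^{kd/2}$.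
   Context: Random $k$-XOR with probability $p$: each of the $n^k$ tuples $S\in[n]^k$ is independently included with probability $p$; for each included $S=(s_1,\dots,s_k)$ a constraint $\prod_{i=1}^k x_{s_i}=\eta_S$ is added, with $\eta_S$ i.i.d. uniform in $\{\pm1\}$. The constraint tensor $T$ has $T_S=\eta_S$ if $S$ is included and $T_S=0$ otherwise. $M^\Phi$ is the $n^{k/2}\times n^{k/2}$ matrix with rows/columns indexed by $[n]^{k/2}$ and $M^\Phi_{U,V}=T_{(U,V)}$ ($(U,V)$ the concatenation). $S^\Phi=\frac12(M^\Phi+(M^\Phi)^\top)$. For $d\ge1$, $S^{\Phi,d}$ has rows/columns indexed by $[n]^{kd/2}$, each tuple written as a concatenation $(U_1,\dots,U_d)$ of blocks in $[n]^{k/2}$, and $S^{\Phi,d}_{(U_1,\dots,U_d),(V_1,\dots,V_d)}=\prod_{s=1}^dS^\Phi_{U_s,V_s}$. For $I=(i_1,\dots,i_q)$ and $\pi\in\mathbb{S}_q$ (permutations of $[q]$), $\pi(I)=(i_{\pi(1)},\dots,i_{\pi(q)})$. Then $R^{\Phi,d}_{I,J}=\frac{1}{((kd/2)!)^2}\sum_{\pi,\sigma\in\mathbb{S}_{kd/2}}S^{\Phi,d}_{\pi(I),\sigma(J)}$. $\mathrm{hist}(I)=(\alpha_1,\dots,\alpha_n)$ with $\alpha_i$ the number of occurrences of $i$ in $I$; $\mathrm{hist}(I)!=\prod_i\alpha_i!$. Given $I_1,\dots,I_{2\ell}\in[n]^{kd/2}$ (indices modulo $2\ell$) and $\pi_j,\sigma_j\in\mathbb{S}_{kd/2}$,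 let $A_{j,s}$ be the $s$-th block of $\pi_j(I_j)$ and $B_{j,s}$ the $s$-th block of $\sigma_j(I_{j+1})$. $\mathrm{Par}(\{I_j\},\{\pi_j\},\{\sigma_j\})$ is the partition of $\mathcal{I}$ into classes of the relation $(j,s)\sim(j',s')$ iff $(A_{j,s},B_{j,s})=(A_{j',s'},B_{j',s'})$ or $=(B_{j',s'},A_{j',s'})$; $|\mathcal{Q}|$ denotes the number of classes. A partition is even if all classes have even size. $\{I_j\}$ is $\mathcal{Q}$-valid if there exist $\{\sigma_j\}$ with $\mathrm{Par}(\{I_j\},\{\mathrm{id}\},\{\sigma_j\})=\mathcal{Q}$ ($\{\mathrm{id}\}$: all $\pi_j$ identity). *)

theory Defs
  imports "HOL-Probability.Probability" "HOL-Combinatorics.Permutations" "HOL-Library.Disjoint_Sets"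
begin

text \<open>Tuples in [n]^m, with [n] rendered as {0..<n}; tuples are lists of length m.\<close>
definition tuples :: "nat \<Rightarrow> nat \<Rightarrow> nat list set" where
  "tuples n m = {I. length I = m \<and> set I \<subseteq> {..<n}}"

text \<open>Distribution of one entry T_S: 0 if S is not included (prob 1-p),
  otherwise a uniform sign eta_S.\<close>
definition entry_pmf :: "real \<Rightarrow> real pmf" where
  "entry_pmf p = bind_pmf (bernoulli_pmf p)
     (\<lambda>b. if b then map_pmf (\<lambda>c. if c then 1 else -1) (bernoulli_pmf (1/2)) else return_pmf 0)"

text \<open>The random constraint tensor T of a random k-XOR instance with probability p
  (independent entries over all tuples in [n]^k; value 0 outside [n]^k).\<close>
definition kxor_pmf :: "nat \<Rightarrow> nat \<Rightarrow> real \<Rightarrow> (nat list \<Rightarrow> real) pmf" where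
  "kxor_pmf n k p = Pi_pmf (tuples n k) 0 (\<lambda>_. entry_pmf p)"

text \<open>S^Phi_{U,V} = (M_{U,V} + M_{V,U})/2 with M_{U,V} = T_{(U,V)}.\<close>
definition S_phi :: "(nat list \<Rightarrow> real) \<Rightarrow> nat list \<Rightarrow> nat list \<Rightarrow> real" where
  "S_phi T U V = (T (U @ V) + T (V @ U)) / 2"

text \<open>The s-th block (0-based) of size h of a tuple.\<close>
definition block :: "nat \<Rightarrow> nat list \<Rightarrow> nat \<Rightarrow> nat list" where
  "block h X s = take h (drop (s * h) X)"

definition S_phi_d :: "nat \<Rightarrow> nat \<Rightarrow> (nat list \<Rightarrow> real) \<Rightarrow> nat list \<Rightarrow> nat list \<Rightarrow> real" where
  "S_phi_d k d T I J = (\<Prod>s<d. S_phi T (block (k div 2) I s) (block (k div 2) J s))"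

text \<open>pi(I) = (i_{pi(1)},...,i_{pi(q)}), 0-based: pi permutes {0..<q}.\<close>
definition apply_perm :: "(nat \<Rightarrow> nat) \<Rightarrow> nat list \<Rightarrow> nat list" where
  "apply_perm \<pi> I = map (\<lambda>t. I ! \<pi> t) [0..<length I]"

definition R_phi_d :: "nat \<Rightarrow> nat \<Rightarrow> (nat list \<Rightarrow> real) \<Rightarrow> nat list \<Rightarrow> nat list \<Rightarrow> real" where
  "R_phi_d k d T I J =
     (1 / (fact (k * d div 2))\<^sup>2) *
     (\<Sum>\<pi>\<in>{\<pi>. \<pi> permutes {..<k * d div 2}}. \<Sum>\<sigma>\<in>{\<sigma>. \<sigma> permutes {..<k * d div 2}}.
        S_phi_d k d T (apply_perm \<pi> I) (apply_perm \<sigma> J))"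

definition mat_mult :: "'i set \<Rightarrow> ('i \<Rightarrow> 'i \<Rightarrow> real) \<Rightarrow> ('i \<Rightarrow> 'i \<Rightarrow> real) \<Rightarrow> ('i \<Rightarrow> 'i \<Rightarrow> real)" where
  "mat_mult A X Y = (\<lambda>i j. \<Sum>t\<in>A. X i t * Y t j)"

fun mat_pow :: "'i set \<Rightarrow> ('i \<Rightarrow> 'i \<Rightarrow> real) \<Rightarrow> nat \<Rightarrow> ('i \<Rightarrow> 'i \<Rightarrow> real)" where
  "mat_pow A X 0 = (\<lambda>i j. if i = j then 1 else 0)"
| "mat_pow A X (Suc m) = mat_mult A (mat_pow A X m) X"

definition mat_trace :: "'i set \<Rightarrow> ('i \<Rightarrow> 'i \<Rightarrow> real) \<Rightarrow> real" where
  "mat_trace A X = (\<Sum>i\<in>A. X i i)"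

text \<open>The index set I = {(j,s)}, 0-based: j < 2l, s < d.\<close>
definition idx :: "nat \<Rightarrow> nat \<Rightarrow> (nat \<times> nat) set" where
  "idx d l = {..<2 * l} \<times> {..<d}"

definition par_rel :: "nat \<Rightarrow> nat \<Rightarrow> nat \<Rightarrow> (nat \<Rightarrow> nat list) \<Rightarrow> (nat \<Rightarrow> nat \<Rightarrow> nat)
    \<Rightarrow> (nat \<Rightarrow> nat \<Rightarrow> nat) \<Rightarrow> ((nat \<times> nat) \<times> (nat \<times> nat)) set" where
  "par_rel k d l Is pis sigmas =
     (let A = (\<lambda>(j, s). block (k div 2) (apply_perm (pis j) (Is j)) s);
          B = (\<lambda>(j, s). block (k div 2) (apply_perm (sigmas j) (Is ((j + 1) mod (2 * l)))) s)
      in {(x, y). x \<in> idx d l \<and> y \<in> idx d l \<and>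
                  ((A x, B x) = (A y, B y) \<or> (A x, B x) = (B y, A y))})"

definition Par :: "nat \<Rightarrow> nat \<Rightarrow> nat \<Rightarrow> (nat \<Rightarrow> nat list) \<Rightarrow> (nat \<Rightarrow> nat \<Rightarrow> nat)
    \<Rightarrow> (nat \<Rightarrow> nat \<Rightarrow> nat) \<Rightarrow> (nat \<times> nat) set set" where
  "Par k d l Is pis sigmas = idx d l // par_rel k d l Is pis sigmas"

definition Q_valid :: "nat \<Rightarrow> nat \<Rightarrow> nat \<Rightarrow> (nat \<times> nat) set set \<Rightarrow> (nat \<Rightarrow> nat list) \<Rightarrow> bool" where
  "Q_valid k d l Q Is \<longleftrightarrow>
     (\<exists>sigmas. (\<forall>j<2 * l. sigmas j permutes {..<k * d div 2}) \<and> Par k d l Is (\<lambda>_. id) sigmas = Q)"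

definition even_partitions :: "nat \<Rightarrow> nat \<Rightarrow> (nat \<times> nat) set set set" where
  "even_partitions d l = {Q. partition_on (idx d l) Q \<and> (\<forall>C\<in>Q. even (card C))}"

text \<open>hist(I)! = prod_i alpha_i!.\<close>
definition hist_fact :: "nat \<Rightarrow> nat list \<Rightarrow> real" where
  "hist_fact n I = (\<Prod>i<n. fact (count_list I i))"

end

theory Submission
  imports Defs
begin

text \<open>
  Expanding the trace of \<open>R\<^sup>2\<^sup>l\<close> over closed walks \<open>I\<^sub>1, \<dots>, I\<^sub>2\<^sub>l\<close> and over the permutations
  \<open>\<pi>\<^sub>j, \<sigma>\<^sub>j\<close> turns it into a sum of products of entries of \<open>S\<^sup>\<Phi>\<close>, hence of monomials in the
  independent entries of T. Such a monomial has expectation zero unless every unordered pair of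
  blocks \<open>{A\<^sub>j\<^sub>,\<^sub>s, B\<^sub>j\<^sub>,\<^sub>s}\<close> occurs an even number of times, and otherwise at most \<open>p\<^sup>|\<^sup>Q\<^sup>|\<close> with
  \<open>Q = Par\<close>. The permutations \<open>\<pi>\<^sub>j\<close> can be absorbed into the tuples \<open>I\<^sub>j\<close>, which costs a factor
  \<open>((kd/2)!)\<^sup>2\<^sup>l\<close>. For fixed \<open>Q\<close>-valid tuples, the permuted tuples \<open>\<sigma>\<^sub>j(I\<^sub>j\<^sub>+\<^sub>1)\<close> are determined by one
  block per class of \<open>Q\<close>, with at most \<open>(kd/2)\<^sup>k\<^sup>/\<^sup>2\<close> choices each, and each such sequence arises from
  at most \<open>\<Prod>\<^sub>j hist(I\<^sub>j)!\<close> choices of the \<open>\<sigma>\<^sub>j\<close>.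
\<close>

section \<open>Tuples and permutations\<close>

abbreviation perms :: "nat \<Rightarrow> (nat \<Rightarrow> nat) set" where
  "perms m \<equiv> {\<sigma>. \<sigma> permutes {..<m}}"

lemma finite_tuples: "finite (tuples n m)"
proof -
  have "tuples n m = {xs. set xs \<subseteq> {..<n} \<and> length xs = m}" by (auto simp: tuples_def)
  then show ?thesis by (simp add: finite_lists_length_eq)
qed

lemma length_apply_perm [simp]: "length (apply_perm \<pi> I) = length I"
  by (simp add: apply_perm_def)

lemma apply_perm_id [simp]: "apply_perm id I = I"
  by (simp add: apply_perm_def map_nth)

lemma nth_apply_perm: "t < length I \<Longrightarrow> apply_perm \<pi> I ! t = I ! \<pi> t"
  by (simp add: apply_perm_def)

lemma apply_perm_apply_perm:
  assumes "\<tau> permutes {..<length I}"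
  shows "apply_perm \<tau> (apply_perm \<pi> I) = apply_perm (\<pi> \<circ> \<tau>) I"
proof -
  have "\<tau> t < length I" if "t < length I" for t
    using permutes_in_image[OF assms, of t] that by auto
  then show ?thesis by (auto simp: apply_perm_def intro!: nth_equalityI)
qed

lemma apply_perm_inv_apply_perm:
  "\<pi> permutes {..<length I} \<Longrightarrow> apply_perm (inv \<pi>) (apply_perm \<pi> I) = I"
  by (simp add: apply_perm_apply_perm permutes_inv permutes_inv_o)

lemma apply_perm_apply_perm_inv:
  "\<pi> permutes {..<length I} \<Longrightarrow> apply_perm \<pi> (apply_perm (inv \<pi>) I) = I"
  by (simp add: apply_perm_apply_perm permutes_inv permutes_inv_o)

lemma set_apply_perm_subset:
  assumes "\<pi> permutes {..<length I}"
  shows "set (apply_perm \<pi> I) \<subseteq> set I"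
proof -
  have "\<pi> t < length I" if "t < length I" for t
    using permutes_in_image[OF assms, of t] that by auto
  then show ?thesis by (auto simp: apply_perm_def)
qed

lemma apply_perm_in_tuples:
  "I \<in> tuples n m \<Longrightarrow> \<pi> permutes {..<m} \<Longrightarrow> apply_perm \<pi> I \<in> tuples n m"
  using set_apply_perm_subset[of \<pi> I] by (auto simp: tuples_def)

lemma block_in_tuples:
  assumes "X \<in> tuples n (h * d)" "s < d"
  shows "block h X s \<in> tuples n h"
proof -
  have "s * h + h \<le> h * d"
    using assms(2) by (metis add.commute mult.commute mult_Suc_right mult_le_mono2 Suc_leI)
  then show ?thesis
    using assms set_take_subset[of h "drop (s * h) X"] set_drop_subset[of "s * h" X]
    by (auto simp: block_def tuples_def)
qed

lemma set_block_subset: "set (block h X s) \<subseteq> set X"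
  unfolding block_def by (meson order_trans set_drop_subset set_take_subset)

lemma concat_blocks: "length X = h * d \<Longrightarrow> concat (map (block h X) [0..<d]) = X"
proof (induction d arbitrary: X)
  case 0
  then show ?case by simp
next
  case (Suc d)
  have "block h (take (h * d) X) s = block h X s" if "s < d" for s
  proof -
    have "s * h + h \<le> h * d"
      using that by (metis add.commute mult.commute mult_Suc_right mult_le_mono2 Suc_leI)
    then show ?thesis by (simp add: block_def take_drop min_def algebra_simps)
  qed
  then have "concat (map (block h X) [0..<d]) = concat (map (block h (take (h * d) X)) [0..<d])"
    by (intro arg_cong[where f = concat] map_cong) auto
  also have "\<dots> = take (h * d) X"
    using Suc.prems by (intro Suc.IH) simp
  finally have "concat (map (block h X) [0..<Suc d]) = take (h * d) X @ take h (drop (d * h) X)"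
    by (simp add: block_def)
  also have "\<dots> = X"
    using Suc.prems by (simp add: mult.commute take_add[symmetric])
  finally show ?case .
qed

lemma card_perms_mapping_le_card_stabiliser:
  "card {\<sigma> \<in> perms (length I). apply_perm \<sigma> I = Y} \<le> card {\<tau> \<in> perms (length I). apply_perm \<tau> I = I}"
proof (cases "{\<sigma> \<in> perms (length I). apply_perm \<sigma> I = Y} = {}")
  case True
  then show ?thesis by (simp only: card.empty le0)
next
  case False
  then obtain \<sigma>0 where \<sigma>0: "\<sigma>0 permutes {..<length I}" "apply_perm \<sigma>0 I = Y" by auto
  show ?thesis
  proof (rule card_inj_on_le)
    show "inj_on (\<lambda>\<sigma>. \<sigma> \<circ> inv \<sigma>0) {\<sigma> \<in> perms (length I). apply_perm \<sigma> I = Y}"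
    proof (rule inj_onI)
      fix \<sigma> \<sigma>' :: "nat \<Rightarrow> nat" assume "\<sigma> \<circ> inv \<sigma>0 = \<sigma>' \<circ> inv \<sigma>0"
      then have "\<sigma> \<circ> inv \<sigma>0 \<circ> \<sigma>0 = \<sigma>' \<circ> inv \<sigma>0 \<circ> \<sigma>0" by simp
      then show "\<sigma> = \<sigma>'" by (simp add: o_assoc[symmetric] permutes_inv_o[OF \<sigma>0(1)])
    qed
    show "(\<lambda>\<sigma>. \<sigma> \<circ> inv \<sigma>0) ` {\<sigma> \<in> perms (length I). apply_perm \<sigma> I = Y}
        \<subseteq> {\<tau> \<in> perms (length I). apply_perm \<tau> I = I}"
    proof (rule image_subsetI)
      fix \<sigma> assume "\<sigma> \<in> {\<sigma> \<in> perms (length I). apply_perm \<sigma> I = Y}"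
      then have \<sigma>: "\<sigma> permutes {..<length I}" "Y = apply_perm \<sigma> I" by auto
      have "apply_perm (\<sigma> \<circ> inv \<sigma>0) I = apply_perm (inv \<sigma>0) (apply_perm \<sigma>0 I)"
        using \<sigma> \<sigma>0 apply_perm_apply_perm[of "inv \<sigma>0" I \<sigma>] by (simp add: permutes_inv)
      also have "\<dots> = I" by (rule apply_perm_inv_apply_perm[OF \<sigma>0(1)])
      finally have "apply_perm (\<sigma> \<circ> inv \<sigma>0) I = I" .
      then show "\<sigma> \<circ> inv \<sigma>0 \<in> {\<tau> \<in> perms (length I). apply_perm \<tau> I = I}"
        using \<sigma>(1) \<sigma>0(1) by (simp add: permutes_compose permutes_inv)
    qed
    show "finite {\<tau> \<in> perms (length I). apply_perm \<tau> I = I}"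
      by (rule finite_subset[OF _ finite_permutations]) auto
  qed
qed

text \<open>A permutation fixing I permutes each level set of I, and it is determined by these
  restrictions.\<close>
lemma card_stabiliser_le_hist_fact:
  assumes "set I \<subseteq> {..<n}"
  shows "real (card {\<tau> \<in> perms (length I). apply_perm \<tau> I = I}) \<le> hist_fact n I"
proof -
  define F where "F i = {u. u < length I \<and> I ! u = i}" for i
  define res where "res \<tau> = (\<lambda>i\<in>{..<n}. restrict_id \<tau> (F i))" for \<tau> :: "nat \<Rightarrow> nat"
  have finF: "finite (F i)" for i by (simp add: F_def)
  have "inj_on res {\<tau> \<in> perms (length I). apply_perm \<tau> I = I}"
  proof (rule inj_onI, rule ext)
    fix \<tau> \<tau>' u
    assume \<tau>: "\<tau> \<in> {\<tau> \<in> perms (length I). apply_perm \<tau> I = I}"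
      and \<tau>': "\<tau>' \<in> {\<tau> \<in> perms (length I). apply_perm \<tau> I = I}" and eq: "res \<tau> = res \<tau>'"
    show "\<tau> u = \<tau>' u"
    proof (cases "u < length I")
      case True
      then have "I ! u < n" "u \<in> F (I ! u)" using assms nth_mem by (auto simp: F_def)
      then show ?thesis using fun_cong[OF fun_cong[OF eq, of "I ! u"], of u] by (simp add: res_def)
    qed (use \<tau> \<tau>' in \<open>auto simp: permutes_def\<close>)
  qed
  moreover have "res ` {\<tau> \<in> perms (length I). apply_perm \<tau> I = I} \<subseteq> PiE {..<n} (\<lambda>i. {\<pi>. \<pi> permutes F i})"
  proof (clarsimp simp: res_def)
    fix \<tau> i assume \<tau>: "\<tau> permutes {..<length I}" "apply_perm \<tau> I = I" and i: "i < n"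
    have "I ! \<tau> u = I ! u" if "u < length I" for u
      using nth_apply_perm[OF that, of \<tau>] \<tau>(2) by simp
    then have "\<tau> ` F i \<subseteq> F i"
      using permutes_in_image[OF \<tau>(1)] by (auto simp: F_def)
    then have "\<tau> ` F i = F i"
      using finF permutes_inj_on[OF \<tau>(1)] by (intro endo_inj_surj) auto
    then show "restrict_id \<tau> (F i) permutes F i"
      using permutes_inj_on[OF \<tau>(1)] by (intro permutes_restrict_id bij_betw_imageI)
  qed
  ultimately have "card {\<tau> \<in> perms (length I). apply_perm \<tau> I = I} \<le> card (PiE {..<n} (\<lambda>i. {\<pi>. \<pi> permutes F i}))"
    by (intro card_inj_on_le finite_PiE finite_permutations finF) auto
  also have "\<dots> = (\<Prod>i<n. fact (count_list I i))"
    by (simp add: card_PiE card_permutations finF F_def count_list_eq_length_filter length_filter_conv_card eq_commute)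
  finally have "real (card {\<tau> \<in> perms (length I). apply_perm \<tau> I = I}) \<le> real (\<Prod>i<n. fact (count_list I i) :: nat)"
    by (simp only: of_nat_le_iff)
  then show ?thesis
    unfolding hist_fact_def by (simp add: of_nat_prod)
qed

section \<open>The partition of a walk\<close>

lemma quotient_kernel:
  "X // {(x, y). x \<in> X \<and> y \<in> X \<and> f x = f y} = (\<lambda>x. {y \<in> X. f y = f x}) ` X"
  unfolding quotient_def Image_def by (auto simp: eq_commute)

lemma card_quotient_kernel:
  assumes "finite X"
  shows "card (X // {(x, y). x \<in> X \<and> y \<in> X \<and> f x = f y}) = card (f ` X)"
proof -
  have "(\<lambda>x. {y \<in> X. f y = f x}) ` X = (\<lambda>v. {y \<in> X. f y = v}) ` f ` X" by auto
  moreover have "inj_on (\<lambda>v. {y \<in> X. f y = v}) (f ` X)" by (auto simp: inj_on_def)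
  ultimately show ?thesis by (simp add: quotient_kernel card_image)
qed

text \<open>For \<open>x = (j, s)\<close>, A_block and B_block are the paper's blocks \<open>A\<^sub>j\<^sub>,\<^sub>s\<close> and \<open>B\<^sub>j\<^sub>,\<^sub>s\<close> (indices
  from 0), and walk_edge is the unordered pair of the two.\<close>
definition A_block :: "nat \<Rightarrow> (nat \<Rightarrow> nat list) \<Rightarrow> (nat \<Rightarrow> nat \<Rightarrow> nat) \<Rightarrow> nat \<times> nat \<Rightarrow> nat list" where
  "A_block k Is pis x = block (k div 2) (apply_perm (pis (fst x)) (Is (fst x))) (snd x)"

definition B_block ::
    "nat \<Rightarrow> nat \<Rightarrow> (nat \<Rightarrow> nat list) \<Rightarrow> (nat \<Rightarrow> nat \<Rightarrow> nat) \<Rightarrow> nat \<times> nat \<Rightarrow> nat list" where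
  "B_block k l Is sigmas x =
     block (k div 2) (apply_perm (sigmas (fst x)) (Is ((fst x + 1) mod (2 * l)))) (snd x)"

definition walk_edge :: "nat \<Rightarrow> nat \<Rightarrow> (nat \<Rightarrow> nat list) \<Rightarrow> (nat \<Rightarrow> nat \<Rightarrow> nat)
    \<Rightarrow> (nat \<Rightarrow> nat \<Rightarrow> nat) \<Rightarrow> nat \<times> nat \<Rightarrow> nat list set" where
  "walk_edge k l Is pis sigmas x = {A_block k Is pis x, B_block k l Is sigmas x}"

lemma finite_idx: "finite (idx d l)"
  by (simp add: idx_def)

lemma par_rel_eq_kernel:
  "par_rel k d l Is pis sigmas = {(x, y). x \<in> idx d l \<and> y \<in> idx d l \<and>
      walk_edge k l Is pis sigmas x = walk_edge k l Is pis sigmas y}"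
  unfolding par_rel_def Let_def walk_edge_def A_block_def B_block_def doubleton_eq_iff
  by (auto simp: case_prod_unfold)

lemma Par_eq_fibres:
  "Par k d l Is pis sigmas =
     (\<lambda>x. {y \<in> idx d l. walk_edge k l Is pis sigmas y = walk_edge k l Is pis sigmas x}) ` idx d l"
  unfolding Par_def par_rel_eq_kernel by (rule quotient_kernel)

lemma card_Par: "card (Par k d l Is pis sigmas) = card (walk_edge k l Is pis sigmas ` idx d l)"
  unfolding Par_def par_rel_eq_kernel by (rule card_quotient_kernel[OF finite_idx])

lemma Par_cong:
  assumes "\<And>x. x \<in> idx d l \<Longrightarrow> walk_edge k l Is pis sigmas x = walk_edge k l Is' pis' sigmas' x"
  shows "Par k d l Is pis sigmas = Par k d l Is' pis' sigmas'"
  unfolding Par_eq_fibres using assms by (intro image_cong refl) auto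

lemma partition_on_Par: "partition_on (idx d l) (Par k d l Is pis sigmas)"
  unfolding Par_def par_rel_eq_kernel
  by (rule partition_on_quotient) (auto simp: equiv_def refl_on_def sym_def trans_def)

lemma Par_in_even_partitions_iff:
  "Par k d l Is pis sigmas \<in> even_partitions d l \<longleftrightarrow>
     (\<forall>x \<in> idx d l. even (card {y \<in> idx d l. walk_edge k l Is pis sigmas y = walk_edge k l Is pis sigmas x}))"
  using partition_on_Par[of d l k Is pis sigmas] unfolding even_partitions_def Par_eq_fibres by auto

lemma finite_even_partitions: "finite (even_partitions d l)"
proof (rule finite_subset)
  show "even_partitions d l \<subseteq> Pow (Pow (idx d l))"
    by (auto simp: even_partitions_def partition_on_def)
qed (simp add: finite_idx)

section \<open>Moments of the random constraint tensor\<close>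

lemma pmf_entry_pmf:
  assumes "0 \<le> p" "p \<le> 1"
  shows "pmf (entry_pmf p) 1 = p / 2" "pmf (entry_pmf p) (-1) = p / 2" "pmf (entry_pmf p) 0 = 1 - p"
proof -
  have "{x. x} = {True}" "{x. \<not> x} = {False}" by auto
  then show "pmf (entry_pmf p) 1 = p / 2" "pmf (entry_pmf p) (-1) = p / 2" "pmf (entry_pmf p) 0 = 1 - p"
    using assms by (simp_all add: entry_pmf_def pmf_bind pmf_map vimage_def measure_pmf_single)
qed

lemma set_entry_pmf_subset: "set_pmf (entry_pmf p) \<subseteq> {-1, 0, 1}"
  by (auto simp: entry_pmf_def split: if_splits)

lemma expectation_entry_pmf_power:
  assumes "0 \<le> p" "p \<le> 1"
  shows "measure_pmf.expectation (entry_pmf p) (\<lambda>t. t ^ a) = (if a = 0 then 1 else if even a then p else 0)"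
proof -
  have "measure_pmf.expectation (entry_pmf p) (\<lambda>t. t ^ a) =
      (\<Sum>t\<in>{-1, 0, 1::real}. pmf (entry_pmf p) t *\<^sub>R t ^ a)"
    by (rule integral_measure_pmf) (use set_entry_pmf_subset in auto)
  also have "\<dots> = p / 2 * (-1) ^ a + (1 - p) * 0 ^ a + p / 2"
    by (simp add: pmf_entry_pmf[OF assms])
  finally show ?thesis by (cases "a = 0") (auto simp: power_0_left)
qed

lemma expectation_pair_pmf_mult:
  fixes u :: "'a \<Rightarrow> real" and v :: "'b \<Rightarrow> real"
  assumes "finite (set_pmf P)" "finite (set_pmf Q)"
  shows "measure_pmf.expectation (pair_pmf P Q) (\<lambda>z. u (fst z) * v (snd z)) =
         measure_pmf.expectation P u * measure_pmf.expectation Q v"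
proof -
  have "measure_pmf.expectation (pair_pmf P Q) (\<lambda>z. u (fst z) * v (snd z)) =
        (\<Sum>z\<in>set_pmf P \<times> set_pmf Q. pmf (pair_pmf P Q) z *\<^sub>R (u (fst z) * v (snd z)))"
    by (rule integral_measure_pmf) (use assms in auto)
  also have "\<dots> = (\<Sum>a\<in>set_pmf P. pmf P a * u a) * (\<Sum>b\<in>set_pmf Q. pmf Q b * v b)"
    unfolding sum.cartesian_product sum_product by (rule sum.cong) (auto simp: pmf_pair algebra_simps)
  also have "\<dots> = measure_pmf.expectation P u * measure_pmf.expectation Q v"
    using assms by (simp add: integral_measure_pmf[of "set_pmf P"] integral_measure_pmf[of "set_pmf Q"])
  finally show ?thesis .
qed

lemma finite_set_Pi_pmf:
  "finite A \<Longrightarrow> (\<And>x. x \<in> A \<Longrightarrow> finite (set_pmf (p x))) \<Longrightarrow> finite (set_pmf (Pi_pmf A dflt p))"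
  by (subst set_Pi_pmf) (auto intro!: finite_PiE_dflt)

text \<open>Unlike the library's expectation_prod_Pi_pmf, no sign condition is needed for finite supports.\<close>
lemma expectation_prod_Pi_pmf_finite:
  fixes f :: "_ \<Rightarrow> _ \<Rightarrow> real"
  assumes "finite A" "\<And>x. x \<in> A \<Longrightarrow> finite (set_pmf (p x))"
  shows "measure_pmf.expectation (Pi_pmf A dflt p) (\<lambda>y. \<Prod>x\<in>A. f x (y x)) =
         (\<Prod>x\<in>A. measure_pmf.expectation (p x) (f x))"
  using assms
proof (induction A rule: finite_induct)
  case (insert x A)
  have "measure_pmf.expectation (Pi_pmf (insert x A) dflt p) (\<lambda>y. \<Prod>z\<in>insert x A. f z (y z)) =
        measure_pmf.expectation (pair_pmf (p x) (Pi_pmf A dflt p))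
          (\<lambda>yg. \<Prod>z\<in>insert x A. f z (((snd yg)(x := fst yg)) z))"
    using insert by (simp add: Pi_pmf_insert case_prod_unfold)
  also have "\<dots> = measure_pmf.expectation (pair_pmf (p x) (Pi_pmf A dflt p))
          (\<lambda>yg. f x (fst yg) * (\<lambda>g. \<Prod>z\<in>A. f z (g z)) (snd yg))"
    using insert by (intro Bochner_Integration.integral_cong refl) (auto intro!: prod.cong)
  also have "\<dots> = measure_pmf.expectation (p x) (f x) *
      measure_pmf.expectation (Pi_pmf A dflt p) (\<lambda>g. \<Prod>z\<in>A. f z (g z))"
    by (rule expectation_pair_pmf_mult) (use insert in \<open>auto intro!: finite_set_Pi_pmf\<close>)
  finally show ?case using insert by simp
qed simp

lemma finite_set_kxor_pmf: "finite (set_pmf (kxor_pmf n k p))"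
  unfolding kxor_pmf_def
  by (rule finite_set_Pi_pmf) (auto simp: finite_tuples intro: finite_subset[OF set_entry_pmf_subset])

lemma expectation_kxor_monomial:
  assumes X: "finite X" and w: "w ` X \<subseteq> tuples n k" and p: "0 \<le> p" "p \<le> 1"
  shows "measure_pmf.expectation (kxor_pmf n k p) (\<lambda>T. \<Prod>x\<in>X. T (w x)) =
    (if \<forall>x\<in>X. even (card {y \<in> X. w y = w x}) then p ^ card (w ` X) else 0)"
proof -
  define mult where "mult v = card {x \<in> X. w x = v}" for v
  define moment where "moment a = (if a = 0 then 1 else if even a then p else 0)" for a :: nat
  have "(\<Prod>x\<in>X. T (w x)) = (\<Prod>v\<in>tuples n k. T v ^ mult v)" for T :: "nat list \<Rightarrow> real"
  proof -
    have "(\<Prod>x\<in>X. T (w x)) = (\<Prod>v\<in>tuples n k. \<Prod>x\<in>{x \<in> X. w x = v}. T (w x))"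
      by (rule prod.group[symmetric]) (use X w finite_tuples in auto)
    then show ?thesis by (simp add: mult_def)
  qed
  then have "measure_pmf.expectation (kxor_pmf n k p) (\<lambda>T. \<Prod>x\<in>X. T (w x)) =
      measure_pmf.expectation (Pi_pmf (tuples n k) 0 (\<lambda>_. entry_pmf p)) (\<lambda>T. \<Prod>v\<in>tuples n k. T v ^ mult v)"
    by (simp add: kxor_pmf_def)
  also have "\<dots> = (\<Prod>v\<in>tuples n k. measure_pmf.expectation (entry_pmf p) (\<lambda>t. t ^ mult v))"
    by (rule expectation_prod_Pi_pmf_finite[where f = "\<lambda>v t. t ^ mult v"])
      (auto simp: finite_tuples intro: finite_subset[OF set_entry_pmf_subset])
  also have "\<dots> = (\<Prod>v\<in>tuples n k. moment (mult v))"
    by (simp add: expectation_entry_pmf_power[OF p] moment_def)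
  also have "\<dots> = (\<Prod>v\<in>w ` X. moment (mult v))"
  proof (rule prod.mono_neutral_right[OF finite_tuples w])
    show "\<forall>v\<in>tuples n k - w ` X. moment (mult v) = 1"
    proof
      fix v assume "v \<in> tuples n k - w ` X"
      then have "{x \<in> X. w x = v} = {}" by auto
      then have "mult v = 0" by (simp only: mult_def card.empty)
      then show "moment (mult v) = 1" by (simp add: moment_def)
    qed
  qed
  also have "\<dots> = (if \<forall>x\<in>X. even (card {y \<in> X. w y = w x}) then p ^ card (w ` X) else 0)"
  proof (cases "\<forall>x\<in>X. even (card {y \<in> X. w y = w x})")
    case True
    have "moment (mult v) = p" if "v \<in> w ` X" for v
      using that True X by (auto simp: moment_def mult_def)
    then show ?thesis using True by simp
  next
    case False
    then obtain x where "x \<in> X" "odd (mult (w x))" by (auto simp: mult_def)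
    then have "moment (mult (w x)) = 0" by (auto simp: moment_def elim: oddE)
    then have "(\<Prod>v\<in>w ` X. moment (mult v)) = 0"
      using X \<open>x \<in> X\<close> by (intro prod_zero) auto
    with False show ?thesis by auto
  qed
  finally show ?thesis .
qed

lemma prod_S_phi_eq_sum_orientations:
  assumes "finite X"
  shows "(\<Prod>x\<in>X. S_phi T (A x) (B x)) =
    (1 / 2) ^ card X * (\<Sum>Y\<in>Pow X. \<Prod>x\<in>X. T (if x \<in> Y then A x @ B x else B x @ A x))"
proof -
  have "(\<Prod>x\<in>X. S_phi T (A x) (B x)) = (1 / 2) ^ card X * (\<Prod>x\<in>X. T (A x @ B x) + T (B x @ A x))"
    by (simp add: S_phi_def prod_dividef power_one_over)
  also have "(\<Prod>x\<in>X. T (A x @ B x) + T (B x @ A x)) =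
      (\<Sum>Y\<in>Pow X. (\<Prod>x\<in>Y. T (A x @ B x)) * (\<Prod>x\<in>X - Y. T (B x @ A x)))"
    by (rule prod_add[OF assms])
  also have "\<dots> = (\<Sum>Y\<in>Pow X. \<Prod>x\<in>X. T (if x \<in> Y then A x @ B x else B x @ A x))"
  proof (rule sum.cong[OF refl])
    fix Y assume "Y \<in> Pow X"
    then have "X \<inter> {x. x \<in> Y} = Y" "X \<inter> - {x. x \<in> Y} = X - Y" by auto
    then show "(\<Prod>x\<in>Y. T (A x @ B x)) * (\<Prod>x\<in>X - Y. T (B x @ A x)) =
        (\<Prod>x\<in>X. T (if x \<in> Y then A x @ B x else B x @ A x))"
      by (simp add: if_distrib[of T] prod.If_cases[OF assms])
  qed
  finally show ?thesis .
qed

text \<open>An odd class of g is a disjoint union of classes of f, so one of them is odd.\<close>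
lemma exists_odd_fibre_of_refinement:
  assumes X: "finite X" and x0: "x0 \<in> X" and odd: "odd (card {y \<in> X. g y = g x0})"
    and g: "\<And>x. x \<in> X \<Longrightarrow> g x = \<phi> (f x)"
  shows "\<exists>x\<in>X. odd (card {y \<in> X. f y = f x})"
proof (rule ccontr)
  assume "\<not> ?thesis"
  then have even: "even (card {y \<in> X. f y = f x})" if "x \<in> X" for x
    using that by blast
  define C where "C = {y \<in> X. g y = g x0}"
  have "card C = (\<Sum>v\<in>f ` C. card {y \<in> C. f y = v})"
    using card_eq_sum sum.group[of C "f ` C" f "\<lambda>_. 1 :: nat"] X by (simp add: C_def)
  also have "\<dots> = (\<Sum>v\<in>f ` C. card {y \<in> X. f y = v})"
    using g by (intro sum.cong refl arg_cong[where f = card]) (auto simp: C_def)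
  finally have "even (card C)"
    using even by (auto intro!: dvd_sum simp: C_def)
  then show False using odd by (simp add: C_def)
qed

lemma expectation_prod_S_phi_le:
  fixes A B :: "'a \<Rightarrow> nat list"
  assumes X: "finite X" and AB: "\<And>x. x \<in> X \<Longrightarrow> A x \<in> tuples n h \<and> B x \<in> tuples n h"
    and p: "0 \<le> p" "p \<le> 1" and k: "k = 2 * h"
  shows "measure_pmf.expectation (kxor_pmf n k p) (\<lambda>T. \<Prod>x\<in>X. S_phi T (A x) (B x)) \<le>
    (if \<forall>x\<in>X. even (card {y \<in> X. {A y, B y} = {A x, B x}}) then p ^ card ((\<lambda>x. {A x, B x}) ` X) else 0)"
    (is "_ \<le> ?bound")
proof -
  define w where "w Y x = (if x \<in> Y then A x @ B x else B x @ A x)" for Y x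
  have w_tuples: "w Y ` X \<subseteq> tuples n k" for Y
    using AB k by (fastforce simp: w_def tuples_def)
  have pair_w: "{A x, B x} = {take h (w Y x), drop h (w Y x)}" if "x \<in> X" for Y x
    using AB[OF that] by (auto simp: w_def tuples_def)
  have monomial_le: "measure_pmf.expectation (kxor_pmf n k p) (\<lambda>T. \<Prod>x\<in>X. T (w Y x)) \<le> ?bound" for Y
  proof (cases "\<forall>x\<in>X. even (card {y \<in> X. {A y, B y} = {A x, B x}})")
    case True
    have "(\<lambda>x. {A x, B x}) ` X = (\<lambda>v. {take h v, drop h v}) ` w Y ` X"
      using pair_w by (force simp: image_image)
    moreover have "card ((\<lambda>v. {take h v, drop h v}) ` w Y ` X) \<le> card (w Y ` X)"
      by (rule card_image_le) (use X in simp)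
    ultimately have "card ((\<lambda>x. {A x, B x}) ` X) \<le> card (w Y ` X)"
      by simp
    then have "p ^ card (w Y ` X) \<le> p ^ card ((\<lambda>x. {A x, B x}) ` X)"
      using p by (intro power_decreasing) auto
    then show ?thesis
      using True p by (simp add: expectation_kxor_monomial[OF X w_tuples p])
  next
    case False
    then obtain x0 where "x0 \<in> X" "odd (card {y \<in> X. {A y, B y} = {A x0, B x0}})" by auto
    then have "\<exists>x\<in>X. odd (card {y \<in> X. w Y y = w Y x})"
      using pair_w by (intro exists_odd_fibre_of_refinement[OF X, where \<phi> = "\<lambda>v. {take h v, drop h v}"]) auto
    then have "\<not> (\<forall>x\<in>X. even (card {y \<in> X. w Y y = w Y x}))"
      by blast
    then have "measure_pmf.expectation (kxor_pmf n k p) (\<lambda>T. \<Prod>x\<in>X. T (w Y x)) = 0"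
      by (simp only: expectation_kxor_monomial[OF X w_tuples p] if_False)
    then show ?thesis
      using False by (simp only: if_False order.refl)
  qed
  have "measure_pmf.expectation (kxor_pmf n k p) (\<lambda>T. \<Prod>x\<in>X. S_phi T (A x) (B x)) =
      (1 / 2) ^ card X * (\<Sum>Y\<in>Pow X. measure_pmf.expectation (kxor_pmf n k p) (\<lambda>T. \<Prod>x\<in>X. T (w Y x)))"
    by (simp add: prod_S_phi_eq_sum_orientations[OF X] w_def
        integrable_measure_pmf_finite[OF finite_set_kxor_pmf])
  also have "\<dots> \<le> (1 / 2) ^ card X * (\<Sum>Y\<in>Pow X. ?bound)"
    by (intro mult_left_mono sum_mono monomial_le) auto
  also have "\<dots> = ?bound"
    using X by (simp add: card_Pow power_one_over)
  finally show ?thesis .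
qed

section \<open>Traces as sums over closed walks\<close>

lemma mat_pow_Suc_eq_sum_walks:
  assumes A: "finite A" and i: "i \<in> A"
  shows "mat_pow A X (Suc r) i j =
    (\<Sum>Is\<in>{Is \<in> PiE {..<Suc r} (\<lambda>_. A). Is 0 = i}. (\<Prod>t<r. X (Is t) (Is (Suc t))) * X (Is r) j)"
proof (induction r arbitrary: j)
  case 0
  have "{Is \<in> PiE {..<Suc 0} (\<lambda>_. A). Is 0 = i} = {restrict (\<lambda>_. i) {..<Suc 0}}"
    using i by (auto simp: PiE_iff extensional_def fun_eq_iff)
  moreover have "(\<Sum>t\<in>A. (if i = t then 1 else 0) * X t j) = (\<Sum>t\<in>A. if i = t then X t j else 0)"
    by (rule sum.cong) auto
  ultimately show ?case using A i by (simp add: mat_mult_def)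
next
  case (Suc r)
  define D where "D = {Is \<in> PiE {..<Suc r} (\<lambda>_. A). Is 0 = i}"
  define D' where "D' = {Is \<in> PiE {..<Suc (Suc r)} (\<lambda>_. A). Is 0 = i}"
  have bij: "bij_betw (\<lambda>(Is, t). Is(Suc r := t)) (D \<times> A) D'"
    by (rule bij_betw_byWitness[where f' = "\<lambda>Is'. (Is'(Suc r := undefined), Is' (Suc r))"])
      (auto simp: D_def D'_def PiE_iff extensional_def fun_eq_iff)
  have "mat_pow A X (Suc (Suc r)) i j = (\<Sum>t\<in>A. mat_pow A X (Suc r) i t * X t j)"
    by (simp add: mat_mult_def)
  also have "\<dots> = (\<Sum>t\<in>A. \<Sum>Is\<in>D. (\<Prod>t'<r. X (Is t') (Is (Suc t'))) * X (Is r) t * X t j)"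
    by (simp only: Suc.IH D_def sum_distrib_right)
  also have "\<dots> = (\<Sum>(Is, t)\<in>D \<times> A. (\<Prod>t'<r. X (Is t') (Is (Suc t'))) * X (Is r) t * X t j)"
    by (subst sum.swap) (simp add: sum.cartesian_product)
  also have "\<dots> = (\<Sum>x\<in>D \<times> A. (\<lambda>Is'. (\<Prod>t'<Suc r. X (Is' t') (Is' (Suc t'))) * X (Is' (Suc r)) j)
      ((\<lambda>(Is, t). Is(Suc r := t)) x))"
    by (rule sum.cong) (auto intro!: prod.cong)
  also have "\<dots> = (\<Sum>Is'\<in>D'. (\<Prod>t'<Suc r. X (Is' t') (Is' (Suc t'))) * X (Is' (Suc r)) j)"
    by (rule sum.reindex_bij_betw[OF bij])
  finally show ?case by (simp add: D'_def)
qed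

lemma mat_trace_mat_pow_eq_sum_closed_walks:
  assumes A: "finite A" and L: "0 < L"
  shows "mat_trace A (mat_pow A X L) = (\<Sum>Is\<in>PiE {..<L} (\<lambda>_. A). \<Prod>j<L. X (Is j) (Is ((j + 1) mod L)))"
proof -
  obtain r where r: "L = Suc r" using L gr0_implies_Suc by blast
  define D where "D = PiE {..<Suc r} (\<lambda>_. A)"
  have "mat_trace A (mat_pow A X (Suc r)) =
      (\<Sum>i\<in>A. \<Sum>Is\<in>{Is \<in> D. Is 0 = i}. (\<Prod>t<r. X (Is t) (Is (Suc t))) * X (Is r) (Is 0))"
    unfolding mat_trace_def D_def
    by (rule sum.cong) (auto simp del: mat_pow.simps simp: mat_pow_Suc_eq_sum_walks[OF A])
  also have "\<dots> = (\<Sum>Is\<in>D. (\<Prod>t<r. X (Is t) (Is (Suc t))) * X (Is r) (Is 0))"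
    by (rule sum.group) (use A in \<open>auto simp: D_def PiE_iff intro!: finite_PiE\<close>)
  also have "\<dots> = (\<Sum>Is\<in>D. \<Prod>j<Suc r. X (Is j) (Is ((j + 1) mod Suc r)))"
    by (intro sum.cong refl) (simp add: prod.lessThan_Suc)
  finally show ?thesis by (simp add: D_def r)
qed

lemma prod_rotate:
  fixes f :: "nat \<Rightarrow> 'a :: comm_monoid_mult"
  assumes "0 < L"
  shows "(\<Prod>j<L. f ((j + 1) mod L)) = (\<Prod>j<L. f j)"
proof -
  obtain r where r: "L = Suc r" using assms gr0_implies_Suc by blast
  have "(\<Prod>j<Suc r. f ((j + 1) mod Suc r)) = (\<Prod>j<r. f (Suc j)) * f 0"
    by (simp add: prod.lessThan_Suc)
  also have "\<dots> = (\<Prod>j<Suc r. f j)"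
    by (simp only: prod.lessThan_Suc_shift mult.commute)
  finally show ?thesis by (simp add: r)
qed

definition walk_weight :: "nat \<Rightarrow> nat \<Rightarrow> nat \<Rightarrow> (nat list \<Rightarrow> real) \<Rightarrow> (nat \<Rightarrow> nat list)
    \<Rightarrow> (nat \<Rightarrow> nat \<Rightarrow> nat) \<Rightarrow> (nat \<Rightarrow> nat \<Rightarrow> nat) \<Rightarrow> real" where
  "walk_weight k d l T Is pis sigmas = (\<Prod>x\<in>idx d l. S_phi T (A_block k Is pis x) (B_block k l Is sigmas x))"

lemma prod_R_phi_d_closed_walk:
  "(\<Prod>j<2 * l. R_phi_d k d T (Is j) (Is ((j + 1) mod (2 * l)))) =
     (1 / (fact (k * d div 2))\<^sup>2) ^ (2 * l) *
     (\<Sum>pis\<in>PiE {..<2 * l} (\<lambda>_. perms (k * d div 2)). \<Sum>sigmas\<in>PiE {..<2 * l} (\<lambda>_. perms (k * d div 2)).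
        walk_weight k d l T Is pis sigmas)"
proof -
  define P where "P = perms (k * d div 2)"
  define L where "L = 2 * l"
  define g where "g j \<pi> \<sigma> = S_phi_d k d T (apply_perm \<pi> (Is j)) (apply_perm \<sigma> (Is ((j + 1) mod L)))"
    for j \<pi> \<sigma>
  have fin: "finite P" by (simp add: P_def finite_permutations)
  have "(\<Prod>j<L. R_phi_d k d T (Is j) (Is ((j + 1) mod L))) =
      (\<Prod>j<L. 1 / (fact (k * d div 2))\<^sup>2 * (\<Sum>\<pi>\<in>P. \<Sum>\<sigma>\<in>P. g j \<pi> \<sigma>))"
    by (simp add: R_phi_d_def g_def P_def)
  also have "\<dots> = (1 / (fact (k * d div 2))\<^sup>2) ^ L * (\<Prod>j<L. \<Sum>\<pi>\<in>P. \<Sum>\<sigma>\<in>P. g j \<pi> \<sigma>)"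
    by (simp only: prod.distrib prod_constant card_lessThan)
  also have "(\<Prod>j<L. \<Sum>\<pi>\<in>P. \<Sum>\<sigma>\<in>P. g j \<pi> \<sigma>) =
      (\<Sum>pis\<in>PiE {..<L} (\<lambda>_. P). \<Sum>sigmas\<in>PiE {..<L} (\<lambda>_. P). \<Prod>j<L. g j (pis j) (sigmas j))"
    using fin by (simp add: prod_sum_PiE)
  also have "\<dots> = (\<Sum>pis\<in>PiE {..<L} (\<lambda>_. P). \<Sum>sigmas\<in>PiE {..<L} (\<lambda>_. P). walk_weight k d l T Is pis sigmas)"
  proof (intro sum.cong refl)
    fix pis sigmas
    have "(\<Prod>j<L. g j (pis j) (sigmas j)) =
        (\<Prod>j<L. \<Prod>s<d. S_phi T (A_block k Is pis (j, s)) (B_block k l Is sigmas (j, s)))"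
      by (simp add: g_def S_phi_d_def A_block_def B_block_def L_def)
    then show "(\<Prod>j<L. g j (pis j) (sigmas j)) = walk_weight k d l T Is pis sigmas"
      by (simp add: walk_weight_def idx_def L_def prod.cartesian_product case_prod_unfold)
  qed
  finally show ?thesis by (simp add: L_def P_def)
qed

lemma bij_betw_compose_perms:
  assumes "\<And>j. j < L \<Longrightarrow> \<rho> j permutes S"
  shows "bij_betw (\<lambda>\<sigma>. \<lambda>j\<in>{..<L}. \<rho> j \<circ> \<sigma> j)
    (PiE {..<L} (\<lambda>_. {\<sigma>. \<sigma> permutes S})) (PiE {..<L} (\<lambda>_. {\<sigma>. \<sigma> permutes S}))"
proof -
  have "inv (\<rho> j) (\<rho> j y) = y" "\<rho> j (inv (\<rho> j) y) = y" if "j < L" for j y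
    using permutes_inverses[OF assms[OF that]] by auto
  then show ?thesis
    by (intro bij_betw_byWitness[where f' = "\<lambda>\<sigma>. \<lambda>j\<in>{..<L}. inv (\<rho> j) \<circ> \<sigma> j"])
      (use assms in \<open>auto simp: PiE_iff extensional_def fun_eq_iff intro!: permutes_compose permutes_inv\<close>)
qed

lemma bij_betw_apply_perms:
  assumes "\<And>j. j < L \<Longrightarrow> \<pi> j permutes {..<m}"
  shows "bij_betw (\<lambda>Is. \<lambda>j\<in>{..<L}. apply_perm (\<pi> j) (Is j))
    (PiE {..<L} (\<lambda>_. tuples n m)) (PiE {..<L} (\<lambda>_. tuples n m))"
proof (rule bij_betw_byWitness[where f' = "\<lambda>Is. \<lambda>j\<in>{..<L}. apply_perm (inv (\<pi> j)) (Is j)"])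
  have len: "length (Is j) = m" if "Is \<in> PiE {..<L} (\<lambda>_. tuples n m)" "j < L" for Is j
    using that by (auto simp: tuples_def)
  show "\<forall>Is\<in>PiE {..<L} (\<lambda>_. tuples n m).
      (\<lambda>j\<in>{..<L}. apply_perm (inv (\<pi> j)) ((\<lambda>j\<in>{..<L}. apply_perm (\<pi> j) (Is j)) j)) = Is"
    using assms len by (auto simp: PiE_iff extensional_def fun_eq_iff apply_perm_inv_apply_perm)
  show "\<forall>Is\<in>PiE {..<L} (\<lambda>_. tuples n m).
      (\<lambda>j\<in>{..<L}. apply_perm (\<pi> j) ((\<lambda>j\<in>{..<L}. apply_perm (inv (\<pi> j)) (Is j)) j)) = Is"
    using assms len by (auto simp: PiE_iff extensional_def fun_eq_iff apply_perm_apply_perm_inv)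
qed (use assms in \<open>auto simp: PiE_iff intro!: apply_perm_in_tuples permutes_inv\<close>)

lemma Par_compose_next_perms:
  assumes l: "0 < l" and Is: "Is \<in> PiE {..<2 * l} (\<lambda>_. tuples n m)" and \<tau>: "\<tau> \<in> PiE {..<2 * l} (\<lambda>_. perms m)"
  shows "Par k d l Is pis (\<lambda>j\<in>{..<2 * l}. pis ((j + 1) mod (2 * l)) \<circ> \<tau> j) =
    Par k d l (\<lambda>j\<in>{..<2 * l}. apply_perm (pis j) (Is j)) (\<lambda>_. id) \<tau>"
proof (rule Par_cong)
  fix x assume "x \<in> idx d l"
  then obtain j s where x: "x = (j, s)" "j < 2 * l" by (auto simp: idx_def)
  have next_j: "(j + 1) mod (2 * l) < 2 * l" using l by simp
  then have "\<tau> j permutes {..<length (Is ((j + 1) mod (2 * l)))}"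
    using Is \<tau> x(2) by (auto simp: PiE_iff tuples_def)
  then show "walk_edge k l Is pis (\<lambda>j\<in>{..<2 * l}. pis ((j + 1) mod (2 * l)) \<circ> \<tau> j) x =
      walk_edge k l (\<lambda>j\<in>{..<2 * l}. apply_perm (pis j) (Is j)) (\<lambda>_. id) \<tau> x"
    using x next_j by (simp add: walk_edge_def A_block_def B_block_def apply_perm_apply_perm)
qed

text \<open>The permutations applied to the left tuples can be absorbed into the tuples themselves.\<close>
lemma sum_Par_eq_fact_power_sum_Par_id:
  fixes G :: "(nat \<times> nat) set set \<Rightarrow> real"
  assumes l: "0 < l"
  shows "(\<Sum>Is\<in>PiE {..<2 * l} (\<lambda>_. tuples n m). \<Sum>pis\<in>PiE {..<2 * l} (\<lambda>_. perms m).
           \<Sum>sigmas\<in>PiE {..<2 * l} (\<lambda>_. perms m). G (Par k d l Is pis sigmas))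
       = fact m ^ (2 * l) * (\<Sum>Is\<in>PiE {..<2 * l} (\<lambda>_. tuples n m). \<Sum>\<tau>\<in>PiE {..<2 * l} (\<lambda>_. perms m).
           G (Par k d l Is (\<lambda>_. id) \<tau>))"
proof -
  define L where "L = 2 * l"
  define N where "N = PiE {..<L} (\<lambda>_. tuples n m)"
  define P where "P = PiE {..<L} (\<lambda>_. perms m)"
  define K where "K = (\<Sum>Is\<in>N. \<Sum>\<tau>\<in>P. G (Par k d l Is (\<lambda>_. id) \<tau>))"
  have L: "0 < L" using l by (simp add: L_def)
  have inner: "(\<Sum>Is\<in>N. \<Sum>sigmas\<in>P. G (Par k d l Is pis sigmas)) = K" if pis: "pis \<in> P" for pis
  proof -
    have perm: "pis j permutes {..<m}" if "j < L" for j
      using pis that by (auto simp: P_def)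
    have "(\<Sum>Is\<in>N. \<Sum>sigmas\<in>P. G (Par k d l Is pis sigmas)) =
        (\<Sum>Is\<in>N. \<Sum>\<tau>\<in>P. G (Par k d l Is pis (\<lambda>j\<in>{..<L}. pis ((j + 1) mod L) \<circ> \<tau> j)))"
      using L perm unfolding P_def
      by (intro sum.cong refl sum.reindex_bij_betw[symmetric] bij_betw_compose_perms) auto
    also have "\<dots> = (\<Sum>Is\<in>N. \<Sum>\<tau>\<in>P. G (Par k d l (\<lambda>j\<in>{..<L}. apply_perm (pis j) (Is j)) (\<lambda>_. id) \<tau>))"
      unfolding L_def N_def P_def using l by (intro sum.cong refl arg_cong[where f = G] Par_compose_next_perms)
    also have "\<dots> = K"
      unfolding K_def N_def using perm
      by (rule sum.reindex_bij_betw[OF bij_betw_apply_perms, where g = "\<lambda>Is. \<Sum>\<tau>\<in>P. G (Par k d l Is (\<lambda>_. id) \<tau>)"])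
    finally show ?thesis .
  qed
  have "(\<Sum>Is\<in>N. \<Sum>pis\<in>P. \<Sum>sigmas\<in>P. G (Par k d l Is pis sigmas)) =
      (\<Sum>pis\<in>P. \<Sum>Is\<in>N. \<Sum>sigmas\<in>P. G (Par k d l Is pis sigmas))"
    by (rule sum.swap)
  also have "\<dots> = card P * K"
    by (simp add: inner)
  also have "card P = fact m ^ L"
    by (simp add: P_def card_PiE card_permutations)
  finally show ?thesis
    by (simp add: K_def L_def N_def P_def)
qed

section \<open>Counting the permutations with a given partition\<close>

definition next_tuples :: "nat \<Rightarrow> (nat \<Rightarrow> nat list) \<Rightarrow> (nat \<Rightarrow> nat \<Rightarrow> nat) \<Rightarrow> nat \<Rightarrow> nat list" where
  "next_tuples l Is \<tau> = (\<lambda>j\<in>{..<2 * l}. apply_perm (\<tau> j) (Is ((j + 1) mod (2 * l))))"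

lemma card_perms_mapping_le_hist_fact:
  assumes "set I \<subseteq> {..<n}"
  shows "real (card {\<sigma> \<in> perms (length I). apply_perm \<sigma> I = Y}) \<le> hist_fact n I"
proof -
  have "real (card {\<sigma> \<in> perms (length I). apply_perm \<sigma> I = Y}) \<le>
      real (card {\<tau> \<in> perms (length I). apply_perm \<tau> I = I})"
    by (simp only: of_nat_le_iff card_perms_mapping_le_card_stabiliser)
  also have "\<dots> \<le> hist_fact n I"
    by (rule card_stabiliser_le_hist_fact[OF assms])
  finally show ?thesis .
qed

lemma card_next_tuples_fibre_le:
  assumes l: "0 < l" and Is: "Is \<in> PiE {..<2 * l} (\<lambda>_. tuples n m)"
  shows "real (card {\<tau> \<in> PiE {..<2 * l} (\<lambda>_. perms m). next_tuples l Is \<tau> = Y}) \<le> (\<Prod>j<2 * l. hist_fact n (Is j))"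
proof -
  define L where "L = 2 * l"
  define I' where "I' j = Is ((j + 1) mod L)" for j
  define F where "F j = {\<sigma> \<in> perms (length (I' j)). apply_perm \<sigma> (I' j) = Y j}" for j
  have I': "I' j \<in> tuples n m" for j
    using PiE_mem[OF Is] l by (simp add: I'_def L_def)
  have "{\<tau> \<in> PiE {..<L} (\<lambda>_. perms m). next_tuples l Is \<tau> = Y} \<subseteq> PiE {..<L} F"
    using I' by (auto simp: next_tuples_def F_def I'_def L_def PiE_iff extensional_def tuples_def)
  moreover have "finite (PiE {..<L} F)"
    by (intro finite_PiE) (auto simp: F_def intro: finite_subset[OF _ finite_permutations])
  ultimately have "card {\<tau> \<in> PiE {..<L} (\<lambda>_. perms m). next_tuples l Is \<tau> = Y} \<le> card (PiE {..<L} F)"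
    by (intro card_mono)
  then have "card {\<tau> \<in> PiE {..<L} (\<lambda>_. perms m). next_tuples l Is \<tau> = Y} \<le> (\<Prod>j<L. card (F j))"
    by (simp add: card_PiE)
  then have "real (card {\<tau> \<in> PiE {..<L} (\<lambda>_. perms m). next_tuples l Is \<tau> = Y}) \<le> (\<Prod>j<L. real (card (F j)))"
    by (simp only: of_nat_le_iff flip: of_nat_prod)
  also have "\<dots> \<le> (\<Prod>j<L. hist_fact n (I' j))"
  proof (rule prod_mono)
    fix j
    have "real (card (F j)) \<le> hist_fact n (I' j)"
      unfolding F_def by (rule card_perms_mapping_le_hist_fact) (use I'[of j] in \<open>simp add: tuples_def\<close>)
    then show "0 \<le> real (card (F j)) \<and> real (card (F j)) \<le> hist_fact n (I' j)" by simp
  qed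
  also have "\<dots> = (\<Prod>j<L. hist_fact n (Is j))"
    unfolding I'_def using l by (intro prod_rotate) (simp add: L_def)
  finally show ?thesis by (simp only: L_def)
qed

lemma doubleton_eq_imp_other:
  "{a, b} = {c, e} \<Longrightarrow> b = (if a = c then e else c)"
  by (auto simp: doubleton_eq_iff)

lemma B_block_eq_within_class:
  assumes "C \<in> Par k d l Is pis sigmas" "x \<in> C" "r \<in> C"
  shows "B_block k l Is sigmas x =
    (if A_block k Is pis x = A_block k Is pis r then B_block k l Is sigmas r else A_block k Is pis r)"
proof -
  have "walk_edge k l Is pis sigmas x = walk_edge k l Is pis sigmas r"
    using assms unfolding Par_eq_fibres by auto
  then show ?thesis
    unfolding walk_edge_def by (rule doubleton_eq_imp_other)
qed

lemma half_mult_eq: "even (k :: nat) \<Longrightarrow> k * d div 2 = k div 2 * d"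
  by (auto elim: evenE)

lemma next_tuples_eq_concat_B_blocks:
  assumes k: "even k" and l: "0 < l" and Is: "Is \<in> PiE {..<2 * l} (\<lambda>_. tuples n (k * d div 2))"
    and \<tau>: "\<tau> \<in> PiE {..<2 * l} (\<lambda>_. perms (k * d div 2))" and j: "j < 2 * l"
  shows "next_tuples l Is \<tau> j = concat (map (\<lambda>s. B_block k l Is \<tau> (j, s)) [0..<d])"
proof -
  have "length (Is ((j + 1) mod (2 * l))) = k div 2 * d"
    using PiE_mem[OF Is, of "(j + 1) mod (2 * l)"] l half_mult_eq[OF k] by (simp add: tuples_def)
  then show ?thesis
    using j by (simp add: next_tuples_def B_block_def concat_blocks)
qed

lemma partition_on_choice:
  assumes "partition_on X Q"
  obtains cls rep where "\<And>x. x \<in> X \<Longrightarrow> cls x \<in> Q \<and> x \<in> cls x" "\<And>C. C \<in> Q \<Longrightarrow> rep C \<in> C"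
proof
  fix x assume "x \<in> X"
  then have "\<exists>C. C \<in> Q \<and> x \<in> C"
    using assms unfolding partition_on_def by blast
  then show "(SOME C. C \<in> Q \<and> x \<in> C) \<in> Q \<and> x \<in> (SOME C. C \<in> Q \<and> x \<in> C)"
    by (rule someI_ex)
next
  fix C assume "C \<in> Q"
  then have "C \<noteq> {}"
    using assms unfolding partition_on_def by blast
  then show "(SOME r. r \<in> C) \<in> C"
    by (simp add: some_in_eq)
qed

lemma card_image_le_prod_card_PiE:
  assumes "finite Q" "\<And>C. C \<in> Q \<Longrightarrow> finite (S C)"
    and "\<And>x. x \<in> D \<Longrightarrow> f x = \<Psi> (g x) \<and> g x \<in> PiE Q S"
  shows "card (f ` D) \<le> (\<Prod>C\<in>Q. card (S C))"
proof -
  have "f ` D \<subseteq> \<Psi> ` PiE Q S"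
    using assms(3) by blast
  then have "card (f ` D) \<le> card (\<Psi> ` PiE Q S)"
    using assms(1,2) by (intro card_mono finite_imageI finite_PiE)
  also have "\<dots> \<le> card (PiE Q S)"
    by (rule card_image_le) (use assms(1,2) in \<open>intro finite_PiE\<close>)
  finally show ?thesis
    using assms(1) by (simp add: card_PiE)
qed

lemma B_block_in_lists:
  assumes k: "even k" and l: "0 < l" and Is: "Is \<in> PiE {..<2 * l} (\<lambda>_. tuples n (k * d div 2))"
    and \<tau>: "\<tau> \<in> PiE {..<2 * l} (\<lambda>_. perms (k * d div 2))" and x: "x \<in> idx d l"
  shows "B_block k l Is \<tau> x \<in> {b. set b \<subseteq> set (Is ((fst x + 1) mod (2 * l))) \<and> length b = k div 2}"
proof -
  obtain j s where x: "x = (j, s)" "j < 2 * l" "s < d"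
    using x by (auto simp: idx_def)
  define I where "I = Is ((j + 1) mod (2 * l))"
  have \<tau>j: "\<tau> j permutes {..<k * d div 2}"
    using PiE_mem[OF \<tau>, of j] x(2) by simp
  have I: "I \<in> tuples n (k * d div 2)"
    using PiE_mem[OF Is, of "(j + 1) mod (2 * l)"] l by (simp add: I_def)
  have "apply_perm (\<tau> j) I \<in> tuples n (k div 2 * d)"
    using apply_perm_in_tuples[OF I \<tau>j] half_mult_eq[OF k] by simp
  moreover have "set (apply_perm (\<tau> j) I) \<subseteq> set I"
    using set_apply_perm_subset[of "\<tau> j" I] \<tau>j I by (simp add: tuples_def)
  ultimately show ?thesis
    using block_in_tuples[of "apply_perm (\<tau> j) I" n "k div 2" d s] set_block_subset[of "k div 2" _ s] x
    by (auto simp: B_block_def I_def tuples_def)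
qed

text \<open>Within a class of the partition every right block is determined by the right block at a
  representative of the class, so the permuted tuples can be rebuilt from one block per class.\<close>
definition rebuild_next_tuples :: "nat \<Rightarrow> nat \<Rightarrow> nat \<Rightarrow> (nat \<Rightarrow> nat list) \<Rightarrow> (nat \<times> nat \<Rightarrow> (nat \<times> nat) set)
    \<Rightarrow> ((nat \<times> nat) set \<Rightarrow> nat \<times> nat) \<Rightarrow> ((nat \<times> nat) set \<Rightarrow> nat list) \<Rightarrow> nat \<Rightarrow> nat list" where
  "rebuild_next_tuples k d l Is cls rep \<beta> =
     (\<lambda>j\<in>{..<2 * l}. concat (map (\<lambda>s.
        if A_block k Is (\<lambda>_. id) (j, s) = A_block k Is (\<lambda>_. id) (rep (cls (j, s))) then \<beta> (cls (j, s))
        else A_block k Is (\<lambda>_. id) (rep (cls (j, s)))) [0..<d]))"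

lemma next_tuples_eq_rebuild:
  assumes k: "even k" and l: "0 < l" and Is: "Is \<in> PiE {..<2 * l} (\<lambda>_. tuples n (k * d div 2))"
    and \<tau>: "\<tau> \<in> PiE {..<2 * l} (\<lambda>_. perms (k * d div 2))" and Q: "Par k d l Is (\<lambda>_. id) \<tau> = Q"
    and cls: "\<And>x. x \<in> idx d l \<Longrightarrow> cls x \<in> Q \<and> x \<in> cls x" and rep: "\<And>C. C \<in> Q \<Longrightarrow> rep C \<in> C"
  shows "next_tuples l Is \<tau> = rebuild_next_tuples k d l Is cls rep (\<lambda>C\<in>Q. B_block k l Is \<tau> (rep C))"
proof
  fix j
  show "next_tuples l Is \<tau> j = rebuild_next_tuples k d l Is cls rep (\<lambda>C\<in>Q. B_block k l Is \<tau> (rep C)) j"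
  proof (cases "j < 2 * l")
    case True
    have B_eq: "B_block k l Is \<tau> (j, s) = (if A_block k Is (\<lambda>_. id) (j, s) = A_block k Is (\<lambda>_. id) (rep (cls (j, s)))
        then B_block k l Is \<tau> (rep (cls (j, s))) else A_block k Is (\<lambda>_. id) (rep (cls (j, s))))"
      and cls_Q: "cls (j, s) \<in> Q" if "s < d" for s
    proof -
      have "(j, s) \<in> idx d l" using True that by (simp add: idx_def)
      then have C: "cls (j, s) \<in> Par k d l Is (\<lambda>_. id) \<tau>" "(j, s) \<in> cls (j, s)" "rep (cls (j, s)) \<in> cls (j, s)"
        using cls rep Q by auto
      then show "cls (j, s) \<in> Q" using Q by simp
      from C show "B_block k l Is \<tau> (j, s) = (if A_block k Is (\<lambda>_. id) (j, s) =
          A_block k Is (\<lambda>_. id) (rep (cls (j, s))) then B_block k l Is \<tau> (rep (cls (j, s)))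
          else A_block k Is (\<lambda>_. id) (rep (cls (j, s))))"
        by (rule B_block_eq_within_class)
    qed
    have "next_tuples l Is \<tau> j = concat (map (\<lambda>s. B_block k l Is \<tau> (j, s)) [0..<d])"
      using next_tuples_eq_concat_B_blocks[OF k l Is \<tau> True] .
    also have "\<dots> = rebuild_next_tuples k d l Is cls rep (\<lambda>C\<in>Q. B_block k l Is \<tau> (rep C)) j"
      unfolding rebuild_next_tuples_def using True B_eq cls_Q
      by (auto intro!: arg_cong[where f = concat] map_cong)
    finally show ?thesis .
  qed (simp add: next_tuples_def rebuild_next_tuples_def)
qed

lemma card_next_tuples_image_le:
  assumes k: "even k" and l: "0 < l" and Is: "Is \<in> PiE {..<2 * l} (\<lambda>_. tuples n (k * d div 2))"
  shows "real (card (next_tuples l Is ` {\<tau> \<in> PiE {..<2 * l} (\<lambda>_. perms (k * d div 2)).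
      Par k d l Is (\<lambda>_. id) \<tau> = Q})) \<le> (real (k * d div 2) ^ (k div 2)) ^ card Q"
proof (cases "{\<tau> \<in> PiE {..<2 * l} (\<lambda>_. perms (k * d div 2)). Par k d l Is (\<lambda>_. id) \<tau> = Q} = {}")
  case False
  define m where "m = k * d div 2"
  define D where "D = {\<tau> \<in> PiE {..<2 * l} (\<lambda>_. perms m). Par k d l Is (\<lambda>_. id) \<tau> = Q}"
  obtain \<tau>0 where "\<tau>0 \<in> D" using False by (auto simp: D_def m_def)
  then have Q: "Q = Par k d l Is (\<lambda>_. id) \<tau>0" by (simp add: D_def)
  have part: "partition_on (idx d l) Q"
    unfolding Q by (rule partition_on_Par)
  have finQ: "finite Q"
    unfolding Q Par_eq_fibres by (simp add: finite_idx)
  obtain cls rep where cls: "\<And>x. x \<in> idx d l \<Longrightarrow> cls x \<in> Q \<and> x \<in> cls x"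
    and rep: "\<And>C. C \<in> Q \<Longrightarrow> rep C \<in> C"
    using partition_on_choice[OF part] by blast
  have rep_idx: "rep C \<in> idx d l" if "C \<in> Q" for C
    using rep[OF that] that part by (auto simp: partition_on_def)
  define S where "S C = {b. set b \<subseteq> set (Is ((fst (rep C) + 1) mod (2 * l))) \<and> length b = k div 2}" for C
  have finS: "finite (S C)" for C
    by (simp add: S_def finite_lists_length_eq)
  have "next_tuples l Is \<tau> = rebuild_next_tuples k d l Is cls rep (\<lambda>C\<in>Q. B_block k l Is \<tau> (rep C))
      \<and> (\<lambda>C\<in>Q. B_block k l Is \<tau> (rep C)) \<in> PiE Q S" if \<tau>: "\<tau> \<in> D" for \<tau>
    using \<tau> next_tuples_eq_rebuild[OF k l Is _ _ cls rep] B_block_in_lists[OF k l Is] rep_idx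
    by (auto simp: D_def S_def m_def)
  then have "card (next_tuples l Is ` D) \<le> (\<Prod>C\<in>Q. card (S C))"
    by (rule card_image_le_prod_card_PiE[where \<Psi> = "rebuild_next_tuples k d l Is cls rep"
          and g = "\<lambda>\<tau>. \<lambda>C\<in>Q. B_block k l Is \<tau> (rep C)", OF finQ finS])
  also have "\<dots> \<le> (\<Prod>C\<in>Q. m ^ (k div 2))"
  proof (rule prod_mono)
    fix C
    have "card (set (Is ((fst (rep C) + 1) mod (2 * l)))) \<le> m"
      using card_length[of "Is ((fst (rep C) + 1) mod (2 * l))"] PiE_mem[OF Is, of "(fst (rep C) + 1) mod (2 * l)"] l
      by (simp add: tuples_def m_def)
    then show "0 \<le> card (S C) \<and> card (S C) \<le> m ^ (k div 2)"
      by (simp add: S_def card_lists_length_eq power_mono)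
  qed
  finally have "real (card (next_tuples l Is ` D)) \<le> real ((m ^ (k div 2)) ^ card Q)"
    by (simp only: of_nat_le_iff prod_constant)
  then show ?thesis
    unfolding D_def m_def by simp
next
  case True
  then show ?thesis by (simp only: image_empty card.empty of_nat_0) simp
qed

lemma card_Par_id_eq_le:
  assumes k: "even k" and l: "0 < l" and Is: "Is \<in> PiE {..<2 * l} (\<lambda>_. tuples n (k * d div 2))"
  shows "real (card {\<tau> \<in> PiE {..<2 * l} (\<lambda>_. perms (k * d div 2)). Par k d l Is (\<lambda>_. id) \<tau> = Q})
    \<le> (real (k * d div 2) ^ (k div 2)) ^ card Q * (\<Prod>j<2 * l. hist_fact n (Is j))"
proof -
  define P where "P = PiE {..<2 * l} (\<lambda>_. perms (k * d div 2))"
  define D where "D = {\<tau> \<in> P. Par k d l Is (\<lambda>_. id) \<tau> = Q}"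
  define H where "H = (\<Prod>j<2 * l. hist_fact n (Is j))"
  have finD: "finite D"
    by (auto simp: D_def P_def intro!: finite_PiE finite_permutations)
  have fibre: "real (card {\<tau> \<in> D. next_tuples l Is \<tau> = Y}) \<le> H" for Y
  proof -
    have "card {\<tau> \<in> D. next_tuples l Is \<tau> = Y} \<le> card {\<tau> \<in> P. next_tuples l Is \<tau> = Y}"
      by (rule card_mono) (auto simp: D_def P_def intro!: finite_PiE finite_permutations)
    then show ?thesis
      using card_next_tuples_fibre_le[OF l Is, of Y] by (simp add: P_def H_def)
  qed
  have "card D = (\<Sum>Y\<in>next_tuples l Is ` D. card {\<tau> \<in> D. next_tuples l Is \<tau> = Y})"
    using sum.group[OF finD finite_imageI[OF finD], where g = "next_tuples l Is" and h = "\<lambda>_. 1 :: nat"] by simp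
  then have "real (card D) = (\<Sum>Y\<in>next_tuples l Is ` D. real (card {\<tau> \<in> D. next_tuples l Is \<tau> = Y}))"
    by simp
  also have "\<dots> \<le> real (card (next_tuples l Is ` D)) * H"
    using sum_mono[OF fibre] by simp
  also have "\<dots> \<le> (real (k * d div 2) ^ (k div 2)) ^ card Q * H"
    using card_next_tuples_image_le[OF k l Is, of Q]
    by (intro mult_right_mono) (auto simp: D_def P_def H_def hist_fact_def intro!: prod_nonneg)
  finally show ?thesis by (simp add: D_def P_def H_def)
qed

section \<open>The trace bound\<close>

definition even_partition_weight :: "nat \<Rightarrow> nat \<Rightarrow> real \<Rightarrow> (nat \<times> nat) set set \<Rightarrow> real" where
  "even_partition_weight d l p Q = (if Q \<in> even_partitions d l then p ^ card Q else 0)"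

lemma expectation_walk_weight_le:
  assumes k: "even k" and l: "0 < l" and p: "0 \<le> p" "p \<le> 1"
    and Is: "Is \<in> PiE {..<2 * l} (\<lambda>_. tuples n (k * d div 2))"
    and pis: "pis \<in> PiE {..<2 * l} (\<lambda>_. perms (k * d div 2))"
    and sigmas: "sigmas \<in> PiE {..<2 * l} (\<lambda>_. perms (k * d div 2))"
  shows "measure_pmf.expectation (kxor_pmf n k p) (\<lambda>T. walk_weight k d l T Is pis sigmas)
    \<le> even_partition_weight d l p (Par k d l Is pis sigmas)"
proof -
  define h where "h = k div 2"
  have blocks: "A_block k Is pis x \<in> tuples n h \<and> B_block k l Is sigmas x \<in> tuples n h"
    if x_idx: "x \<in> idx d l" for x
  proof -
    obtain j s where x: "x = (j, s)" "j < 2 * l" "s < d"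
      using x_idx by (auto simp: idx_def)
    have "(j + 1) mod (2 * l) < 2 * l" using l by simp
    then have "apply_perm (pis j) (Is j) \<in> tuples n (h * d)"
      "apply_perm (sigmas j) (Is ((j + 1) mod (2 * l))) \<in> tuples n (h * d)"
      using PiE_mem[OF Is] PiE_mem[OF pis] PiE_mem[OF sigmas] x(2) half_mult_eq[OF k]
      by (auto simp: h_def intro!: apply_perm_in_tuples)
    then show ?thesis
      using x by (simp add: A_block_def B_block_def h_def block_in_tuples)
  qed
  have "k = 2 * h" using k by (simp add: h_def)
  have "measure_pmf.expectation (kxor_pmf n k p) (\<lambda>T. walk_weight k d l T Is pis sigmas) \<le>
      (if \<forall>x\<in>idx d l. even (card {y \<in> idx d l. walk_edge k l Is pis sigmas y = walk_edge k l Is pis sigmas x})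
       then p ^ card (walk_edge k l Is pis sigmas ` idx d l) else 0)"
    unfolding walk_weight_def walk_edge_def
    by (rule expectation_prod_S_phi_le[where X = "idx d l" and A = "A_block k Is pis" and B = "B_block k l Is sigmas"])
      (use finite_idx blocks p \<open>k = 2 * h\<close> in simp_all)
  then show ?thesis
    by (simp only: even_partition_weight_def Par_in_even_partitions_iff card_Par)
qed

lemma expectation_trace_R_phi_d_le:
  assumes k: "even k" and l: "0 < l" and p: "0 \<le> p" "p \<le> 1"
  shows "measure_pmf.expectation (kxor_pmf n k p)
      (\<lambda>T. mat_trace (tuples n (k * d div 2)) (mat_pow (tuples n (k * d div 2)) (R_phi_d k d T) (2 * l)))
    \<le> (1 / (fact (k * d div 2))\<^sup>2) ^ (2 * l) *
      (\<Sum>Is\<in>PiE {..<2 * l} (\<lambda>_. tuples n (k * d div 2)).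
        \<Sum>pis\<in>PiE {..<2 * l} (\<lambda>_. perms (k * d div 2)). \<Sum>sigmas\<in>PiE {..<2 * l} (\<lambda>_. perms (k * d div 2)).
          even_partition_weight d l p (Par k d l Is pis sigmas))"
proof -
  define N where "N = PiE {..<2 * l} (\<lambda>_. tuples n (k * d div 2))"
  define P where "P = PiE {..<2 * l} (\<lambda>_. perms (k * d div 2))"
  define c where "c = (1 / (fact (k * d div 2))\<^sup>2 :: real) ^ (2 * l)"
  have "mat_trace (tuples n (k * d div 2)) (mat_pow (tuples n (k * d div 2)) (R_phi_d k d T) (2 * l)) =
      c * (\<Sum>Is\<in>N. \<Sum>pis\<in>P. \<Sum>sigmas\<in>P. walk_weight k d l T Is pis sigmas)" for T
  proof -
    have "mat_trace (tuples n (k * d div 2)) (mat_pow (tuples n (k * d div 2)) (R_phi_d k d T) (2 * l)) =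
        (\<Sum>Is\<in>N. \<Prod>j<2 * l. R_phi_d k d T (Is j) (Is ((j + 1) mod (2 * l))))"
      unfolding N_def using l by (intro mat_trace_mat_pow_eq_sum_closed_walks finite_tuples) simp
    also have "\<dots> = (\<Sum>Is\<in>N. c * (\<Sum>pis\<in>P. \<Sum>sigmas\<in>P. walk_weight k d l T Is pis sigmas))"
      by (simp only: prod_R_phi_d_closed_walk c_def P_def)
    finally show ?thesis by (simp add: sum_distrib_left)
  qed
  then have "measure_pmf.expectation (kxor_pmf n k p)
      (\<lambda>T. mat_trace (tuples n (k * d div 2)) (mat_pow (tuples n (k * d div 2)) (R_phi_d k d T) (2 * l)))
    = c * (\<Sum>Is\<in>N. \<Sum>pis\<in>P. \<Sum>sigmas\<in>P.
        measure_pmf.expectation (kxor_pmf n k p) (\<lambda>T. walk_weight k d l T Is pis sigmas))"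
    by (simp add: integrable_measure_pmf_finite[OF finite_set_kxor_pmf])
  also have "\<dots> \<le> c * (\<Sum>Is\<in>N. \<Sum>pis\<in>P. \<Sum>sigmas\<in>P. even_partition_weight d l p (Par k d l Is pis sigmas))"
    unfolding N_def P_def c_def
    by (intro mult_left_mono sum_mono expectation_walk_weight_le[OF k l p]) auto
  finally show ?thesis by (simp add: N_def P_def c_def)
qed

lemma sum_comp_eq_sum_card_fibres:
  fixes w :: "'b \<Rightarrow> 'c :: comm_semiring_1"
  assumes "finite D" "finite S" "\<And>x. x \<in> D \<Longrightarrow> f x \<notin> S \<Longrightarrow> w (f x) = 0"
  shows "(\<Sum>x\<in>D. w (f x)) = (\<Sum>Q\<in>S. w Q * of_nat (card {x \<in> D. f x = Q}))"
proof -
  have "(\<Sum>x\<in>D. w (f x)) = (\<Sum>x\<in>{x \<in> D. f x \<in> S}. w (f x))"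
    using assms by (intro sum.mono_neutral_right) auto
  also have "\<dots> = (\<Sum>Q\<in>S. \<Sum>x\<in>{x \<in> {x \<in> D. f x \<in> S}. f x = Q}. w (f x))"
    by (rule sum.group[symmetric]) (use assms in auto)
  also have "\<dots> = (\<Sum>Q\<in>S. w Q * of_nat (card {x \<in> D. f x = Q}))"
  proof (rule sum.cong[OF refl])
    fix Q assume "Q \<in> S"
    then have "{x \<in> {x \<in> D. f x \<in> S}. f x = Q} = {x \<in> D. f x = Q}" by auto
    then show "(\<Sum>x\<in>{x \<in> {x \<in> D. f x \<in> S}. f x = Q}. w (f x)) = w Q * of_nat (card {x \<in> D. f x = Q})"
      by (simp add: mult.commute)
  qed
  finally show ?thesis .
qed

lemma Q_valid_if_Par_id_eq:
  "\<tau> \<in> PiE {..<2 * l} (\<lambda>_. perms (k * d div 2)) \<Longrightarrow> Par k d l Is (\<lambda>_. id) \<tau> = Q \<Longrightarrow> Q_valid k d l Q Is"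
  unfolding Q_valid_def by (auto simp: PiE_iff)

lemma sum_Par_id_le:
  assumes k: "even k" and l: "0 < l" and p: "0 \<le> p"
  shows "(\<Sum>Is\<in>PiE {..<2 * l} (\<lambda>_. tuples n (k * d div 2)). \<Sum>\<tau>\<in>PiE {..<2 * l} (\<lambda>_. perms (k * d div 2)).
      even_partition_weight d l p (Par k d l Is (\<lambda>_. id) \<tau>))
    \<le> (\<Sum>Q\<in>even_partitions d l. (p * real (k * d div 2) ^ (k div 2)) ^ card Q *
      (\<Sum>Is\<in>{Is \<in> PiE {..<2 * l} (\<lambda>_. tuples n (k * d div 2)). Q_valid k d l Q Is}. \<Prod>j<2 * l. hist_fact n (Is j)))"
proof -
  define N where "N = PiE {..<2 * l} (\<lambda>_. tuples n (k * d div 2))"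
  define P where "P = PiE {..<2 * l} (\<lambda>_. perms (k * d div 2))"
  define w where "w = even_partition_weight d l p"
  define c where "c Is Q = real (card {\<tau> \<in> P. Par k d l Is (\<lambda>_. id) \<tau> = Q})" for Is Q
  define M where "M = real (k * d div 2) ^ (k div 2)"
  have finN: "finite N" by (auto simp: N_def intro!: finite_PiE finite_tuples)
  have finP: "finite P" by (auto simp: P_def intro!: finite_PiE finite_permutations)
  have "(\<Sum>Is\<in>N. \<Sum>\<tau>\<in>P. w (Par k d l Is (\<lambda>_. id) \<tau>)) = (\<Sum>Is\<in>N. \<Sum>Q\<in>even_partitions d l. w Q * c Is Q)"
    unfolding c_def using finP finite_even_partitions
    by (intro sum.cong refl sum_comp_eq_sum_card_fibres) (auto simp: w_def even_partition_weight_def)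
  also have "\<dots> = (\<Sum>Q\<in>even_partitions d l. \<Sum>Is\<in>N. w Q * c Is Q)"
    by (rule sum.swap)
  also have "\<dots> \<le> (\<Sum>Q\<in>even_partitions d l. (p * M) ^ card Q *
      (\<Sum>Is\<in>{Is \<in> N. Q_valid k d l Q Is}. \<Prod>j<2 * l. hist_fact n (Is j)))"
  proof (rule sum_mono)
    fix Q assume Q: "Q \<in> even_partitions d l"
    have "(\<Sum>Is\<in>N. w Q * c Is Q) = (\<Sum>Is\<in>{Is \<in> N. Q_valid k d l Q Is}. w Q * c Is Q)"
      using finN Q_valid_if_Par_id_eq by (intro sum.mono_neutral_right) (auto simp: c_def P_def card_gt_0_iff)
    also have "\<dots> \<le> (\<Sum>Is\<in>{Is \<in> N. Q_valid k d l Q Is}. w Q * (M ^ card Q * (\<Prod>j<2 * l. hist_fact n (Is j))))"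
      using card_Par_id_eq_le[OF k l] p
      by (intro sum_mono mult_left_mono) (auto simp: c_def P_def N_def M_def w_def even_partition_weight_def)
    also have "\<dots> = (p * M) ^ card Q * (\<Sum>Is\<in>{Is \<in> N. Q_valid k d l Q Is}. \<Prod>j<2 * l. hist_fact n (Is j))"
      using Q by (simp add: w_def even_partition_weight_def power_mult_distrib sum_distrib_left mult.assoc)
    finally show "(\<Sum>Is\<in>N. w Q * c Is Q) \<le> (p * M) ^ card Q *
        (\<Sum>Is\<in>{Is \<in> N. Q_valid k d l Q Is}. \<Prod>j<2 * l. hist_fact n (Is j))" .
  qed
  finally show ?thesis by (simp add: N_def P_def w_def M_def)
qed

theorem mainTheorem4:
  fixes k d l n :: nat and p :: real
  assumes "even k" and "d \<ge> 1" and "l \<ge> 1" and "n \<ge> 1" and "0 \<le> p" and "p \<le> 1"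
  shows "measure_pmf.expectation (kxor_pmf n k p)
           (\<lambda>T. mat_trace (tuples n (k * d div 2))
                   (mat_pow (tuples n (k * d div 2)) (R_phi_d k d T) (2 * l)))
         \<le> 1 / (fact (k * d div 2)) ^ (2 * l) *
           (\<Sum>Q\<in>even_partitions d l.
              (p * real (k * d div 2) ^ (k div 2)) ^ card Q *
              (\<Sum>Is\<in>{Is \<in> PiE {..<2 * l} (\<lambda>_. tuples n (k * d div 2)). Q_valid k d l Q Is}.
                 \<Prod>j<2 * l. hist_fact n (Is j)))"
proof -
  define m where "m = k * d div 2"
  define N where "N = PiE {..<2 * l} (\<lambda>_. tuples n m)"
  define P where "P = PiE {..<2 * l} (\<lambda>_. perms m)"
  define w where "w = even_partition_weight d l p"
  define bound where "bound = (\<Sum>Q\<in>even_partitions d l. (p * real m ^ (k div 2)) ^ card Q *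
      (\<Sum>Is\<in>{Is \<in> N. Q_valid k d l Q Is}. \<Prod>j<2 * l. hist_fact n (Is j)))"
  have l: "0 < l" using assms(3) by simp
  have "measure_pmf.expectation (kxor_pmf n k p)
      (\<lambda>T. mat_trace (tuples n m) (mat_pow (tuples n m) (R_phi_d k d T) (2 * l)))
    \<le> (1 / (fact m)\<^sup>2) ^ (2 * l) * (\<Sum>Is\<in>N. \<Sum>pis\<in>P. \<Sum>sigmas\<in>P. w (Par k d l Is pis sigmas))"
    unfolding m_def N_def P_def w_def using assms l by (intro expectation_trace_R_phi_d_le) auto
  also have "\<dots> = (1 / (fact m)\<^sup>2) ^ (2 * l) * (fact m ^ (2 * l) *
      (\<Sum>Is\<in>N. \<Sum>\<tau>\<in>P. w (Par k d l Is (\<lambda>_. id) \<tau>)))"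
    unfolding N_def P_def using l by (simp only: sum_Par_eq_fact_power_sum_Par_id)
  also have "\<dots> \<le> (1 / (fact m)\<^sup>2) ^ (2 * l) * (fact m ^ (2 * l) * bound)"
    unfolding m_def N_def P_def w_def bound_def using assms l
    by (intro mult_left_mono sum_Par_id_le) auto
  also have "\<dots> = 1 / fact m ^ (2 * l) * bound"
    by (simp add: power2_eq_square power_mult_distrib field_simps)
  finally show ?thesis by (simp add: m_def N_def bound_def)
qed

end
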